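(* Let $f(z)=\sum_{k\ge0}a_kz^k$ be an entire function. If $f$ is transcendental then, for all $n\in\mathbb N$, $\kappa(n,r)\to\infty$ as $r\to\infty$. If $f$ is a polynomial of degree $d$, then $\kappa(n,r)\to\infty$ as $r\to\infty$ for all $n\ne d$, but $\kappa(d,r)\to 1$ as $r\to\infty$.
   Context: For $r>0$, $M_1(r)=\frac{1}{2\pi}\int_0^{2\pi}|f(re^{i\theta})|\,d\theta$ and $\kappa(n,r)=\dfrac{M_1(r)}{|a_n|r^n}$, with the convention $\kappa(n,r)=+\infty$ if $a_n=0$. *)

theory Defs
  imports "HOL-Complex_Analysis.Complex_Analysis" "HOL-Library.Extended_Real"
begin

definition taylor_coeff :: "(complex \<Rightarrow> complex) \<Rightarrow> nat \<Rightarrow> complex" where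
  "taylor_coeff f k = (deriv ^^ k) f 0 / of_nat (fact k)"

definition M1 :: "(complex \<Rightarrow> complex) \<Rightarrow> real \<Rightarrow> real" where
  "M1 f r = (1 / (2 * pi)) * integral {0..2*pi} (\<lambda>\<theta>. norm (f (of_real r * exp (\<i> * of_real \<theta>))))"

definition kappa :: "(complex \<Rightarrow> complex) \<Rightarrow> nat \<Rightarrow> real \<Rightarrow> ereal" where
  "kappa f n r = (if taylor_coeff f n = 0 then PInfty
                  else ereal (M1 f r / (norm (taylor_coeff f n) * r ^ n)))"

end

theory Submission
  imports Defs
begin

text \<open>Cauchy's formula for \<open>a_n\<close> as the integral of \<open>f(z)/(2\<pi>i z^(n+1))\<close> over \<open>|z| = r\<close> gives the
  L1 Cauchy estimate \<open>|a_n| r^n \<le> M_1(r)\<close>. Hence if some \<open>a_m\<close> with \<open>m > n\<close> is nonzero, then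
  \<open>\<kappa>(n,r) \<ge> (|a_m|/|a_n|) r^(m-n) \<rightarrow> \<infinity>\<close>; this covers every \<open>n\<close> for transcendental \<open>f\<close> and
  every \<open>n < d\<close> for a polynomial of degree \<open>d\<close>, while \<open>\<kappa>(n,r) = \<infinity>\<close> for \<open>n > d\<close>. For
  \<open>n = d\<close> the triangle inequality on the circle gives \<open>M_1(r) \<le> \<Sum>k\<le>d. |a_k| r^k\<close>, which
  squeezes \<open>\<kappa>(d,r)\<close> between \<open>1\<close> and \<open>1 + O(1/r)\<close>.\<close>

lemma M1_eq_integral_circlepath:
  "M1 f r = integral {0..1} (\<lambda>t. norm (f (circlepath 0 r t)))"
proof -
  have "(\<lambda>\<theta>. \<theta> / (2*pi)) ` {0..2*pi} = {0..1}"
  proof safe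
    fix t :: real assume "t \<in> {0..1}"
    then show "t \<in> (\<lambda>\<theta>. \<theta> / (2*pi)) ` {0..2*pi}"
      by (intro image_eqI[where x="2*pi*t"]) auto
  qed auto
  then show ?thesis
    unfolding M1_def circlepath
    using integral_stretch_real[where m="2*pi" and a=0 and b="2*pi"
        and f="\<lambda>\<theta>. norm (f (of_real r * exp (\<i> * of_real \<theta>)))"]
    by (simp add: mult_ac)
qed

lemma integrable_norm_comp_circlepath:
  assumes "continuous_on UNIV f"
  shows "(\<lambda>t. norm (f (circlepath z r t))) integrable_on {0..1}"
  unfolding circlepath
  by (intro integrable_continuous_interval continuous_on_norm
        continuous_on_compose2[OF assms] continuous_intros) auto

lemma norm_circlepath_0: "norm (circlepath 0 r t) = \<bar>r\<bar>"
  by (simp add: circlepath norm_mult norm_exp)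

lemma M1_le:
  assumes "continuous_on UNIV f" and "r \<ge> 0"
    and bound: "\<And>z. norm z = r \<Longrightarrow> norm (f z) \<le> B"
  shows "M1 f r \<le> B"
proof -
  have "integral {0..1} (\<lambda>t. norm (f (circlepath 0 r t))) \<le> integral {0..1} (\<lambda>_::real. B)"
    using assms by (intro integral_le integrable_norm_comp_circlepath bound) (auto simp: norm_circlepath_0)
  then show ?thesis
    by (simp add: M1_eq_integral_circlepath)
qed

lemma norm_taylor_coeff_mult_power_le_M1:
  assumes entire: "f holomorphic_on UNIV" and r: "r > 0"
  shows "norm (taylor_coeff f n) * r ^ n \<le> M1 f r"
proof -
  have cont: "continuous_on UNIV f"
    using entire holomorphic_on_imp_continuous_on by blast
  define \<gamma> where "\<gamma> = circlepath 0 r"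
  define g where "g = (\<lambda>t. f (\<gamma> t) / \<gamma> t ^ Suc n * vector_derivative \<gamma> (at t within {0..1}))"
  have "((\<lambda>u. f u / (u - 0) ^ Suc n) has_contour_integral
          (2 * pi * \<i>) / fact n * (deriv ^^ n) f 0) \<gamma>"
    unfolding \<gamma>_def using entire r
    by (intro Cauchy_has_contour_integral_higher_derivative_circlepath)
       (auto intro: continuous_on_subset[OF cont])
  then have g_integral: "(g has_integral 2 * pi * \<i> * taylor_coeff f n) {0..1}"
    by (simp add: has_contour_integral_def g_def taylor_coeff_def)
  have norm_g: "norm (g t) = 2 * pi / r ^ n * norm (f (\<gamma> t))" if "t \<in> {0..1}" for t
    using that r
    by (simp add: g_def \<gamma>_def vector_derivative_circlepath01 norm_circlepath_0
        norm_mult norm_divide norm_power norm_exp field_simps)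
  have "(\<lambda>t. 2 * pi / r ^ n * norm (f (\<gamma> t))) integrable_on {0..1}"
    using integrable_on_cmult_left[OF integrable_norm_comp_circlepath[OF cont], of "2 * pi / r ^ n"]
    by (simp add: \<gamma>_def)
  then have "norm (integral {0..1} g) \<le> integral {0..1} (\<lambda>t. 2 * pi / r ^ n * norm (f (\<gamma> t)))"
    using g_integral norm_g by (intro integral_norm_bound_integral) auto
  also have "\<dots> = 2 * pi / r ^ n * M1 f r"
    by (simp add: M1_eq_integral_circlepath \<gamma>_def)
  finally have "2 * pi * norm (taylor_coeff f n) \<le> 2 * pi / r ^ n * M1 f r"
    using integral_unique[OF g_integral] by (simp add: norm_mult)
  then show ?thesis
    using r by (simp add: field_simps)
qed

lemma entire_eq_taylor_polynomial:
  assumes entire: "f holomorphic_on UNIV" and above: "\<forall>k>d. taylor_coeff f k = 0"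
  shows "f z = (\<Sum>k\<le>d. taylor_coeff f k * z ^ k)"
proof -
  have "(\<lambda>k. (deriv ^^ k) f 0 / fact k * (z - 0) ^ k) sums f z"
    using entire
    by (intro holomorphic_power_series[where r="norm z + 1"]) auto
  then have "(\<lambda>k. taylor_coeff f k * z ^ k) sums f z"
    by (simp add: taylor_coeff_def)
  moreover have "(\<lambda>k. taylor_coeff f k * z ^ k) sums (\<Sum>k\<le>d. taylor_coeff f k * z ^ k)"
    using above by (intro sums_finite) auto
  ultimately show ?thesis
    by (rule sums_unique2)
qed

lemma M1_le_sum_norm_taylor_coeff:
  assumes entire: "f holomorphic_on UNIV" and above: "\<forall>k>d. taylor_coeff f k = 0" and "r \<ge> 0"
  shows "M1 f r \<le> (\<Sum>k\<le>d. norm (taylor_coeff f k) * r ^ k)"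
proof (rule M1_le)
  show "continuous_on UNIV f"
    using entire holomorphic_on_imp_continuous_on by blast
next
  fix z :: complex assume "norm z = r"
  have "norm (f z) = norm (\<Sum>k\<le>d. taylor_coeff f k * z ^ k)"
    by (simp add: entire_eq_taylor_polynomial[OF entire above])
  also have "\<dots> \<le> (\<Sum>k\<le>d. norm (taylor_coeff f k * z ^ k))"
    by (rule norm_sum)
  finally show "norm (f z) \<le> (\<Sum>k\<le>d. norm (taylor_coeff f k) * r ^ k)"
    by (simp add: norm_mult norm_power \<open>norm z = r\<close>)
qed fact

lemma kappa_tendsto_PInfty_if_higher_coeff_nonzero:
  assumes entire: "f holomorphic_on UNIV" and "n < m" and am: "taylor_coeff f m \<noteq> 0"
  shows "((\<lambda>r. kappa f n r) \<longlongrightarrow> PInfty) at_top"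
proof (cases "taylor_coeff f n = 0")
  case True
  then show ?thesis by (simp add: kappa_def)
next
  case False
  define c where "c = norm (taylor_coeff f m) / norm (taylor_coeff f n)"
  have "LIM r at_top. c * r ^ (m - n) :> at_top"
    using False am \<open>n < m\<close> unfolding c_def
    by (intro filterlim_tendsto_pos_mult_at_top tendsto_const filterlim_pow_at_top filterlim_ident) auto
  moreover have "eventually (\<lambda>r. c * r ^ (m - n) \<le> M1 f r / (norm (taylor_coeff f n) * r ^ n)) at_top"
    using eventually_gt_at_top[of 0]
  proof eventually_elim
    case (elim r)
    have "c * r ^ (m - n) = norm (taylor_coeff f m) * r ^ m / (norm (taylor_coeff f n) * r ^ n)"
      using False elim \<open>n < m\<close> by (simp add: c_def field_simps flip: power_add)
    also have "\<dots> \<le> M1 f r / (norm (taylor_coeff f n) * r ^ n)"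
      using False elim norm_taylor_coeff_mult_power_le_M1[OF entire elim]
      by (intro divide_right_mono) auto
    finally show ?case .
  qed
  ultimately have "LIM r at_top. M1 f r / (norm (taylor_coeff f n) * r ^ n) :> at_top"
    by (rule filterlim_at_top_mono)
  then show ?thesis
    using False by (simp add: kappa_def tendsto_PInfty_eq_at_top)
qed

lemma kappa_tendsto_1_at_degree:
  assumes entire: "f holomorphic_on UNIV"
    and ad: "taylor_coeff f d \<noteq> 0" and above: "\<forall>k>d. taylor_coeff f k = 0"
  shows "((\<lambda>r. kappa f d r) \<longlongrightarrow> 1) at_top"
proof -
  define A where "A = norm (taylor_coeff f d)"
  have "A > 0"
    using ad by (simp add: A_def)
  define U where "U r = 1 + (\<Sum>k<d. norm (taylor_coeff f k) / A * inverse (r ^ (d - k)))" for r :: real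
  have "(U \<longlongrightarrow> 1 + 0) at_top"
    unfolding U_def
    by (intro tendsto_add tendsto_const tendsto_null_sum tendsto_mult_right_zero
          tendsto_inverse_0_at_top filterlim_pow_at_top filterlim_ident) auto
  then have upper_limit: "(U \<longlongrightarrow> 1) at_top"
    by simp
  have lower: "eventually (\<lambda>r. 1 \<le> M1 f r / (A * r ^ d)) at_top"
    using eventually_gt_at_top[of 0]
  proof eventually_elim
    case (elim r)
    then show ?case
      using norm_taylor_coeff_mult_power_le_M1[OF entire elim, of d] \<open>A > 0\<close>
      by (simp add: A_def field_simps)
  qed
  have upper: "eventually (\<lambda>r. M1 f r / (A * r ^ d) \<le> U r) at_top"
    using eventually_gt_at_top[of 0]
  proof eventually_elim
    case (elim r)
    have pos: "A * r ^ d > 0"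
      using \<open>A > 0\<close> elim by simp
    have "M1 f r / (A * r ^ d) \<le> (\<Sum>k\<le>d. norm (taylor_coeff f k) * r ^ k) / (A * r ^ d)"
      using M1_le_sum_norm_taylor_coeff[OF entire above, of r] elim pos
      by (intro divide_right_mono) auto
    also have "\<dots> = (A * r ^ d + (\<Sum>k<d. norm (taylor_coeff f k) * r ^ k)) / (A * r ^ d)"
      by (simp add: A_def flip: lessThan_Suc_atMost)
    also have "\<dots> = 1 + (\<Sum>k<d. norm (taylor_coeff f k) * r ^ k / (A * r ^ d))"
      using \<open>A > 0\<close> elim by (simp add: add_divide_distrib sum_divide_distrib)
    also have "\<dots> = U r"
      unfolding U_def
    proof (intro arg_cong2[where f="(+)"] refl sum.cong)
      fix k assume "k \<in> {..<d}"
      then have "r ^ d = r ^ k * r ^ (d - k)"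
        by (simp flip: power_add)
      then show "norm (taylor_coeff f k) * r ^ k / (A * r ^ d) = norm (taylor_coeff f k) / A * inverse (r ^ (d - k))"
        using elim \<open>A > 0\<close> by (simp add: field_simps)
    qed
    finally show ?case .
  qed
  have "((\<lambda>r. M1 f r / (A * r ^ d)) \<longlongrightarrow> 1) at_top"
    by (rule tendsto_sandwich[OF lower upper tendsto_const upper_limit])
  then have "((\<lambda>r. ereal (M1 f r / (A * r ^ d))) \<longlongrightarrow> ereal 1) at_top"
    by (rule tendsto_ereal)
  then show ?thesis
    using ad by (simp add: kappa_def A_def one_ereal_def)
qed

theorem theorem4p4:
  fixes f :: "complex \<Rightarrow> complex"
  assumes entire: "f holomorphic_on UNIV"
  shows "((\<not> (\<exists>N. \<forall>k>N. taylor_coeff f k = 0)) \<longrightarrow>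
            (\<forall>n. ((\<lambda>r. kappa f n r) \<longlongrightarrow> PInfty) at_top))
       \<and> (\<forall>d. (taylor_coeff f d \<noteq> 0 \<and> (\<forall>k>d. taylor_coeff f k = 0)) \<longrightarrow>
            (\<forall>n. n \<noteq> d \<longrightarrow> ((\<lambda>r. kappa f n r) \<longlongrightarrow> PInfty) at_top)
            \<and> ((\<lambda>r. kappa f d r) \<longlongrightarrow> 1) at_top)"
proof (intro conjI impI allI)
  fix n assume "\<not> (\<exists>N. \<forall>k>N. taylor_coeff f k = 0)"
  then obtain m where "n < m" "taylor_coeff f m \<noteq> 0"
    by blast
  then show "((\<lambda>r. kappa f n r) \<longlongrightarrow> PInfty) at_top"
    by (rule kappa_tendsto_PInfty_if_higher_coeff_nonzero[OF entire])
next
  fix d n assume deg: "taylor_coeff f d \<noteq> 0 \<and> (\<forall>k>d. taylor_coeff f k = 0)" and "n \<noteq> d"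
  show "((\<lambda>r. kappa f n r) \<longlongrightarrow> PInfty) at_top"
  proof (cases "n < d")
    case True
    then show ?thesis
      using deg kappa_tendsto_PInfty_if_higher_coeff_nonzero[OF entire] by blast
  next
    case False
    then have "taylor_coeff f n = 0"
      using deg \<open>n \<noteq> d\<close> by auto
    then show ?thesis
      by (simp add: kappa_def)
  qed
next
  fix d assume "taylor_coeff f d \<noteq> 0 \<and> (\<forall>k>d. taylor_coeff f k = 0)"
  then show "((\<lambda>r. kappa f d r) \<longlongrightarrow> 1) at_top"
    using kappa_tendsto_1_at_degree[OF entire] by blast
qed

end
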